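(* Consider the gradient flow $\frac{d}{dt}(\mathbf P(t),\mathbf V(t))=-\nabla\mathcal L(\mathbf P(t),\mathbf V(t))$ for the population loss $\mathcal L$. Then: (i) The blocks $\mathbf P_{11},\mathbf P_{21},\mathbf V_{11},\mathbf V_{12}$ and the first rows of $\mathbf V_{21},\mathbf V_{22}$ do not affect the transformer output $\mathsf{TF}_{(\mathbf P,\mathbf V)}(\mathbf H(z))$; the gradient of $\mathcal L$ with respect to each of them is zero, so they remain unchanged throughout the flow. (ii) The gradients of $\mathcal L$ with respect to $\mathbf P_{22}$ and $\bar{\mathbf V}_{22}$ vanish whenever $\mathbf P_{22}=\mathbf 0$ and $\bar{\mathbf V}_{22}=\mathbf 0$; consequently, if $\mathbf P_{22}(0)=\mathbf 0$ and $\bar{\mathbf V}_{22}(0)=\mathbf 0$, then (the gradient flow admits a solution with) $\mathbf P_{22}(t)=\mathbf 0$ and $\bar{\mathbf V}_{22}(t)=\mathbf 0$ for all $t\ge0$.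
   Context: Setting: $d,n\ge1$, $\gamma\in[0,1)$, $\alpha>0$, $D=3d+2$. A linear self-attention block with parameters $(\mathbf P,\mathbf V)\in\mathbb R^{D\times D}\times\mathbb R^{D\times D}$ maps $\mathbf H$ to $\mathbf H+\frac1n(\mathbf V\mathbf H)(\mathbf H^\top\mathbf P\mathbf H)$, and $\mathsf{TF}_{(\mathbf P,\mathbf V)}(\mathbf H)$ is the last $d$ entries of the last column of this output. Partition $\mathbf P=\begin{bmatrix}\mathbf P_{11}&\mathbf P_{12}\\ \mathbf P_{21}&\mathbf P_{22}\end{bmatrix}$, $\mathbf V=\begin{bmatrix}\mathbf V_{11}&\mathbf V_{12}\\ \mathbf V_{21}&\mathbf V_{22}\end{bmatrix}$ with top-left blocks of size $(2d+1)\times(2d+1)$ and bottom-right blocks of size $(d+1)\times(d+1)$; $\bar{\mathbf V}_{21},\bar{\mathbf V}_{22}$ denote the last $d$ rows of $\mathbf V_{21},\mathbf V_{22}$. A random sample $z$ (from a fixed distribution with finite moments as needed) consists of a feature map $\boldsymbol\phi:\mathcal S\times\mathcal A\to\mathbb R^d$, $\mathbf w\in\mathbb R^d$ and a trajectory $(s_0,a_0,r_1,\dots,r_n,s_n,a_n)$. Set $\boldsymbol\phi_i=\boldsymbol\phi(s_i,a_i)$, $\boldsymbol\phi_i^+=\boldsymbol\phi(s_{i+1},a_{i+1})$, $\delta_i=r_{i+1}+\gamma\mathbf w^\top\boldsymbol\phi_i^+-\mathbf w^\top\boldsymbol\phi_i$, $\mathbf x_i=[\boldsymbol\phi_i;\gamma\boldsymbol\phi_i^+;r_{i+1}]$,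 $\tilde{\mathbf w}=[1;\mathbf w]$, prompt $\mathbf H(z)=\begin{bmatrix}\mathbf x_0&\cdots&\mathbf x_{n-1}&\mathbf 0\\ \mathbf 0&\cdots&\mathbf 0&\tilde{\mathbf w}\end{bmatrix}$, and SARSA target $\mathbf w_{\mathrm{SARSA}}(z)=\mathbf w+\frac{\alpha}{n}\sum_{i=0}^{n-1}\delta_i\boldsymbol\phi_i$. The population loss is $\mathcal L(\mathbf P,\mathbf V)=\mathbb E_z\big[\tfrac12\|\mathsf{TF}_{(\mathbf P,\mathbf V)}(\mathbf H(z))-\mathbf w_{\mathrm{SARSA}}(z)\|^2\big]$. *)

theory Defs
  imports "HOL-Analysis.Analysis" "HOL-Probability.Probability"
begin

text \<open>The rows of a prompt are indexed by the type ('d idx), of cardinality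
 (d + d + 1) + (1 + d) = 3d+2.  Indices of the form Inl _ form the first 2d+1
 coordinates (split as phi, gamma*phi^+, r); indices of the form Inr _ form the last
 d+1 coordinates (split as the leading 1 of w-tilde, then w).  Hence for a D x D matrix,
 entry (Inl _, Inl _) lies in the top-left block, (Inl _, Inr _) in the top-right block,
 (Inr _, Inl _) in the bottom-left block and (Inr _, Inr _) in the bottom-right block.
 Row Inr (Inl ()) is the first row of the bottom blocks; rows Inr (Inr j) are the last d
 rows (the bar-blocks).\<close>

type_synonym 'd idx = "(('d + 'd) + unit) + (unit + 'd)"

type_synonym 'd mat = "real ^ 'd idx ^ 'd idx"

text \<open>A sample z = (phi, w, s, a, r): feature map phi : S x A -> R^d, weight vector w,
 states s_0..s_n, actions a_0..a_n and rewards r_1..r_n (r i is r_i).\<close>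

type_synonym ('s, 'a, 'd) sample =
  "('s \<times> 'a \<Rightarrow> real ^ 'd) \<times> (real ^ 'd) \<times> (nat \<Rightarrow> 's) \<times> (nat \<Rightarrow> 'a) \<times> (nat \<Rightarrow> real)"

definition feat :: "('s, 'a, 'd::finite) sample \<Rightarrow> 's \<times> 'a \<Rightarrow> real ^ 'd" where
  "feat z = fst z"

definition wvec :: "('s, 'a, 'd::finite) sample \<Rightarrow> real ^ 'd" where
  "wvec z = fst (snd z)"

definition state :: "('s, 'a, 'd::finite) sample \<Rightarrow> nat \<Rightarrow> 's" where
  "state z = fst (snd (snd z))"

definition action :: "('s, 'a, 'd::finite) sample \<Rightarrow> nat \<Rightarrow> 'a" where
  "action z = fst (snd (snd (snd z)))"

definition reward :: "('s, 'a, 'd::finite) sample \<Rightarrow> nat \<Rightarrow> real" where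
  "reward z = snd (snd (snd (snd z)))"

definition phi :: "('s, 'a, 'd::finite) sample \<Rightarrow> nat \<Rightarrow> real ^ 'd" where
  "phi z i = feat z (state z i, action z i)"

definition phi_plus :: "('s, 'a, 'd::finite) sample \<Rightarrow> nat \<Rightarrow> real ^ 'd" where
  "phi_plus z i = feat z (state z (Suc i), action z (Suc i))"

definition td_error :: "real \<Rightarrow> ('s, 'a, 'd::finite) sample \<Rightarrow> nat \<Rightarrow> real" where
  "td_error \<gamma> z i = reward z (Suc i) + \<gamma> * (wvec z \<bullet> phi_plus z i) - wvec z \<bullet> phi z i"

definition w_sarsa :: "real \<Rightarrow> real \<Rightarrow> nat \<Rightarrow> ('s, 'a, 'd::finite) sample \<Rightarrow> real ^ 'd" where
  "w_sarsa \<gamma> \<alpha> n z = wvec z + (\<alpha> / real n) *\<^sub>R (\<Sum>i<n. td_error \<gamma> z i *\<^sub>R phi z i)"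

definition xcol :: "real \<Rightarrow> ('s, 'a, 'd::finite) sample \<Rightarrow> nat \<Rightarrow> real ^ 'd idx" where
  "xcol \<gamma> z i = (\<chi> k. case k of
       Inl (Inl (Inl j)) \<Rightarrow> phi z i $ j
     | Inl (Inl (Inr j)) \<Rightarrow> \<gamma> * (phi_plus z i $ j)
     | Inl (Inr u) \<Rightarrow> reward z (Suc i)
     | Inr v \<Rightarrow> 0)"

definition wcol :: "('s, 'a, 'd::finite) sample \<Rightarrow> real ^ 'd idx" where
  "wcol z = (\<chi> k. case k of
       Inl v \<Rightarrow> 0
     | Inr (Inl u) \<Rightarrow> 1
     | Inr (Inr j) \<Rightarrow> wvec z $ j)"

definition prompt :: "real \<Rightarrow> nat \<Rightarrow> ('s, 'a, 'd::finite) sample \<Rightarrow> nat \<Rightarrow> real ^ 'd idx" where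
  "prompt \<gamma> n z k = (if k < n then xcol \<gamma> z k else wcol z)"

text \<open>For a D x (n+1) matrix H given by its columns H 0, ..., H n, the block output
 H + (1/n) (V H)(H^T P H) has column l equal to
 H l + (1/n) sum_{k=0}^{n} (H k . P H l) (V H k).\<close>

definition lsa :: "nat \<Rightarrow> 'd::finite mat \<Rightarrow> 'd mat \<Rightarrow> (nat \<Rightarrow> real ^ 'd idx) \<Rightarrow> nat \<Rightarrow> real ^ 'd idx" where
  "lsa n P V H l = H l + (1 / real n) *\<^sub>R (\<Sum>k\<le>n. (H k \<bullet> (P *v H l)) *\<^sub>R (V *v H k))"

definition TF :: "nat \<Rightarrow> 'd::finite mat \<Rightarrow> 'd mat \<Rightarrow> (nat \<Rightarrow> real ^ 'd idx) \<Rightarrow> real ^ 'd" where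
  "TF n P V H = (\<chi> j. lsa n P V H n $ Inr (Inr j))"

definition pop_loss :: "real \<Rightarrow> real \<Rightarrow> nat \<Rightarrow> ('s, 'a, 'd::finite) sample measure \<Rightarrow> 'd mat \<times> 'd mat \<Rightarrow> real" where
  "pop_loss \<gamma> \<alpha> n M PV =
     (\<integral>z. (1/2) * (norm (TF n (fst PV) (snd PV) (prompt \<gamma> n z) - w_sarsa \<gamma> \<alpha> n z))\<^sup>2 \<partial>M)"

definition has_gradient :: "('v::real_inner \<Rightarrow> real) \<Rightarrow> 'v \<Rightarrow> 'v \<Rightarrow> bool" where
  "has_gradient f g x \<longleftrightarrow> (f has_derivative (\<lambda>h. g \<bullet> h)) (at x)"

definition gradient_flow :: "('v::real_inner \<Rightarrow> real) \<Rightarrow> (real \<Rightarrow> 'v) \<Rightarrow> bool" where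
  "gradient_flow f X \<longleftrightarrow>
     (\<forall>t\<ge>0. \<exists>g. has_gradient f g (X t) \<and> (X has_vector_derivative (- g)) (at t within {0..}))"

text \<open>Entries of P in P11 or P21 (i.e. in the first 2d+1 columns).\<close>
definition P_irrel :: "'d::finite idx \<Rightarrow> 'd idx \<Rightarrow> bool" where
  "P_irrel i j \<longleftrightarrow> isl j"

text \<open>Entries of V in V11, V12, or the first rows of V21, V22 (i.e. every row except the
 last d rows).\<close>
definition V_irrel :: "'d::finite idx \<Rightarrow> 'd idx \<Rightarrow> bool" where
  "V_irrel i j \<longleftrightarrow> (\<forall>k. i \<noteq> Inr (Inr k))"

definition P22_entry :: "'d::finite idx \<Rightarrow> 'd idx \<Rightarrow> bool" where
  "P22_entry i j \<longleftrightarrow> \<not> isl i \<and> \<not> isl j"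

definition V22bar_entry :: "'d::finite idx \<Rightarrow> 'd idx \<Rightarrow> bool" where
  "V22bar_entry i j \<longleftrightarrow> (\<exists>k. i = Inr (Inr k)) \<and> \<not> isl j"

end

theory Submission
  imports Defs
begin

text \<open>
  The attention output is \<open>TF\<^sub>j = w\<^sub>j + \<Sum>\<^sub>a\<^sub>b\<^sub>c P\<^sub>a\<^sub>b V\<^sub>j\<^sub>c m\<^sub>a\<^sub>b\<^sub>c\<close>, where
  \<open>m\<^sub>a\<^sub>b\<^sub>c = (1/n) \<Sum>\<^sub>k H\<^sub>a\<^sub>k H\<^sub>b\<^sub>n H\<^sub>c\<^sub>k\<close> is an empirical third moment of the prompt. The
  context columns live in the upper \<open>2d+1\<close> coordinates and the query column in the lower
  \<open>d+1\<close>, so \<open>m\<^sub>a\<^sub>b\<^sub>c = 0\<close> unless \<open>b\<close> is a lower index and \<open>a\<close>, \<open>c\<close> lie in the same half.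
  Hence the blocks of (i) never enter the output, the loss is constant along them, its gradient
  vanishes there and a gradient flow cannot move them. Every surviving term containing an entry
  of \<open>P\<^sub>2\<^sub>2\<close> also contains one of bar-\<open>V\<^sub>2\<^sub>2\<close> and vice versa, whence the gradient part
  of (ii).

  For the flow in (ii), the loss is a quartic polynomial in \<open>(P, V)\<close> whose coefficients are
  expectations of products of six prompt or target entries, so the sixth moments make it
  differentiable with locally Lipschitz gradient. A nonnegative such function has a global
  gradient flow: Picard iteration solves the flow of a radially truncated field, and the
  truncation never acts because a descent path satisfies \<open>\<parallel>X t - X 0\<parallel> \<le> (L (X 0) + t) / 2\<close>.
  Finally, the flow of \<open>L\<close> composed with the projection clearing \<open>P\<^sub>2\<^sub>2\<close> and bar-\<open>V\<^sub>2\<^sub>2\<close> stays in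
  the range of that projection, where it is a flow of \<open>L\<close> itself.
\<close>

section \<open>Locally Lipschitz functions and locally Lipschitz gradients\<close>

definition locally_lipschitz :: "('a::real_normed_vector \<Rightarrow> 'b::metric_space) \<Rightarrow> bool" where
  "locally_lipschitz f \<longleftrightarrow> (\<forall>R. \<exists>K. K-lipschitz_on (cball 0 R) f)"

lemma locally_lipschitzE:
  assumes "locally_lipschitz f"
  obtains K where "K-lipschitz_on (cball 0 R) f"
  using assms unfolding locally_lipschitz_def by blast

lemma locally_lipschitz_bounded:
  fixes f :: "'a::real_normed_vector \<Rightarrow> 'b::real_normed_vector" and R :: real
  assumes "locally_lipschitz f"
  obtains B where "0 \<le> B" "\<And>x. norm x \<le> R \<Longrightarrow> norm (f x) \<le> B"
proof -
  obtain K where K: "K-lipschitz_on (cball 0 (max R 0)) f"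
    using assms by (rule locally_lipschitzE)
  have "norm (f x) \<le> norm (f 0) + K * max R 0" if "norm x \<le> R" for x
  proof -
    have "dist (f x) (f 0) \<le> K * dist x 0"
      by (rule lipschitz_onD[OF K]) (use that in auto)
    also have "\<dots> \<le> K * max R 0"
      using that lipschitz_on_nonneg[OF K] by (intro mult_left_mono) auto
    finally show ?thesis
      using norm_triangle_ineq2[of "f x" "f 0"] by (simp add: dist_norm)
  qed
  moreover have "0 \<le> norm (f 0) + K * max R 0"
    using lipschitz_on_nonneg[OF K] by simp
  ultimately show ?thesis by (rule that[rotated])
qed

lemma locally_lipschitz_continuous_on:
  fixes f :: "'a::real_normed_vector \<Rightarrow> 'b::metric_space"
  assumes "locally_lipschitz f"
  shows "continuous_on S f"
proof (intro continuous_at_imp_continuous_on ballI)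
  fix x :: 'a
  obtain K where "K-lipschitz_on (cball 0 (norm x + 1)) f"
    using assms by (rule locally_lipschitzE)
  moreover have "x \<in> interior (cball 0 (norm x + 1))"
    unfolding mem_interior
  proof (intro exI conjI subsetI)
    fix y assume "y \<in> ball x 1"
    then show "y \<in> cball 0 (norm x + 1)"
      using norm_triangle_sub[of y x] by (simp add: dist_norm norm_minus_commute)
  qed simp
  ultimately show "isCont f x"
    by (intro continuous_on_interior lipschitz_on_continuous_on)
qed

lemma locally_lipschitz_const: "locally_lipschitz (\<lambda>x. c)"
  unfolding locally_lipschitz_def by (blast intro: lipschitz_on_constant)

lemma locally_lipschitz_add:
  fixes f g :: "'a::real_normed_vector \<Rightarrow> 'b::real_normed_vector"
  shows "locally_lipschitz f \<Longrightarrow> locally_lipschitz g \<Longrightarrow> locally_lipschitz (\<lambda>x. f x + g x)"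
  unfolding locally_lipschitz_def by (blast intro: lipschitz_on_add)

lemma bounded_linear_locally_lipschitz: "bounded_linear f \<Longrightarrow> locally_lipschitz f"
  unfolding locally_lipschitz_def by (metis bounded_linear.lipschitz_boundE)

lemma locally_lipschitz_compose:
  fixes f :: "'a::real_normed_vector \<Rightarrow> 'b::real_normed_vector"
  assumes g: "locally_lipschitz g" and f: "locally_lipschitz f"
  shows "locally_lipschitz (\<lambda>x. g (f x))"
  unfolding locally_lipschitz_def
proof
  fix R
  obtain B where B: "\<And>x. norm x \<le> R \<Longrightarrow> norm (f x) \<le> B"
    using locally_lipschitz_bounded[OF f] by blast
  obtain K where "K-lipschitz_on (cball 0 R) f" using f by (rule locally_lipschitzE)
  moreover obtain L where "L-lipschitz_on (cball 0 B) g" using g by (rule locally_lipschitzE)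
  then have "L-lipschitz_on (f ` cball 0 R) g"
    by (rule lipschitz_on_subset) (auto intro: B)
  ultimately show "\<exists>K. K-lipschitz_on (cball 0 R) (\<lambda>x. g (f x))"
    by (blast intro: lipschitz_on_compose2)
qed

lemma locally_lipschitz_scaleR:
  fixes f :: "'a::real_normed_vector \<Rightarrow> real" and g :: "'a \<Rightarrow> 'b::real_normed_vector"
  assumes f: "locally_lipschitz f" and g: "locally_lipschitz g"
  shows "locally_lipschitz (\<lambda>x. f x *\<^sub>R g x)"
  unfolding locally_lipschitz_def
proof
  fix R
  obtain K1 where K1: "K1-lipschitz_on (cball 0 R) f" using f by (rule locally_lipschitzE)
  obtain K2 where K2: "K2-lipschitz_on (cball 0 R) g" using g by (rule locally_lipschitzE)
  obtain B1 where B1: "0 \<le> B1" "\<And>x. norm x \<le> R \<Longrightarrow> norm (f x) \<le> B1"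
    using locally_lipschitz_bounded[OF f] by blast
  obtain B2 where B2: "0 \<le> B2" "\<And>x. norm x \<le> R \<Longrightarrow> norm (g x) \<le> B2"
    using locally_lipschitz_bounded[OF g] by blast
  have "(B1 * K2 + K1 * B2)-lipschitz_on (cball 0 R) (\<lambda>x. f x *\<^sub>R g x)"
  proof (rule lipschitz_onI)
    fix x y :: 'a assume xy: "x \<in> cball 0 R" "y \<in> cball 0 R"
    have "f x *\<^sub>R g x - f y *\<^sub>R g y = f x *\<^sub>R (g x - g y) + (f x - f y) *\<^sub>R g y"
      by (simp add: algebra_simps)
    then have "dist (f x *\<^sub>R g x) (f y *\<^sub>R g y) \<le>
        norm (f x) * dist (g x) (g y) + dist (f x) (f y) * norm (g y)"
      by (metis dist_norm dist_real_def norm_scaleR norm_triangle_ineq real_norm_def)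
    also have "\<dots> \<le> B1 * (K2 * dist x y) + (K1 * dist x y) * B2"
    proof (rule add_mono)
      show "norm (f x) * dist (g x) (g y) \<le> B1 * (K2 * dist x y)"
        using B1 xy lipschitz_onD[OF K2 xy] by (intro mult_mono) auto
      show "dist (f x) (f y) * norm (g y) \<le> (K1 * dist x y) * B2"
        using B2 xy lipschitz_onD[OF K1 xy] lipschitz_on_nonneg[OF K1] by (intro mult_mono) auto
    qed
    finally show "dist (f x *\<^sub>R g x) (f y *\<^sub>R g y) \<le> (B1 * K2 + K1 * B2) * dist x y"
      by (simp add: algebra_simps)
  next
    show "0 \<le> B1 * K2 + K1 * B2"
      using B1(1) B2(1) lipschitz_on_nonneg[OF K1] lipschitz_on_nonneg[OF K2] by simp
  qed
  then show "\<exists>K. K-lipschitz_on (cball 0 R) (\<lambda>x. f x *\<^sub>R g x)" ..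
qed

definition locally_C11 :: "('v::real_inner \<Rightarrow> real) \<Rightarrow> bool" where
  "locally_C11 f \<longleftrightarrow>
     locally_lipschitz f \<and> (\<exists>G. locally_lipschitz G \<and> (\<forall>x. has_gradient f (G x) x))"

lemma locally_C11_gradientE:
  assumes "locally_C11 f"
  obtains G where "locally_lipschitz G" "\<And>x. has_gradient f (G x) x"
  using assms unfolding locally_C11_def by blast

lemma locally_C11_const: "locally_C11 (\<lambda>x. c)"
  unfolding locally_C11_def has_gradient_def
  by (auto intro!: exI[of _ "\<lambda>x. 0"] locally_lipschitz_const derivative_eq_intros)

lemma locally_C11_inner: "locally_C11 (\<lambda>x. x \<bullet> e)"
  unfolding locally_C11_def has_gradient_def
  by (auto intro!: exI[of _ "\<lambda>x. e"] locally_lipschitz_const bounded_linear_locally_lipschitz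
      bounded_linear_inner_left derivative_eq_intros simp: inner_commute)

lemma locally_C11_add:
  assumes "locally_C11 p" "locally_C11 q"
  shows "locally_C11 (\<lambda>x. p x + q x)"
proof -
  obtain Gp Gq where "locally_lipschitz Gp" "\<And>x. has_gradient p (Gp x) x"
    "locally_lipschitz Gq" "\<And>x. has_gradient q (Gq x) x"
    using assms by (meson locally_C11_gradientE)
  then show ?thesis
    using assms unfolding locally_C11_def has_gradient_def
    by (auto intro!: exI[of _ "\<lambda>x. Gp x + Gq x"] locally_lipschitz_add
        has_derivative_eq_rhs[OF has_derivative_add] simp: inner_add_left)
qed

lemma locally_C11_mult:
  assumes "locally_C11 p" "locally_C11 q"
  shows "locally_C11 (\<lambda>x. p x * q x)"
proof -
  obtain Gp Gq where "locally_lipschitz Gp" "\<And>x. has_gradient p (Gp x) x"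
    "locally_lipschitz Gq" "\<And>x. has_gradient q (Gq x) x"
    using assms by (meson locally_C11_gradientE)
  moreover have "locally_lipschitz p" "locally_lipschitz q"
    using assms by (simp_all add: locally_C11_def)
  ultimately show ?thesis
    unfolding locally_C11_def has_gradient_def
    by (auto intro!: exI[of _ "\<lambda>x. p x *\<^sub>R Gq x + q x *\<^sub>R Gp x"] locally_lipschitz_add
        locally_lipschitz_scaleR[where 'b=real, simplified] locally_lipschitz_scaleR
        has_derivative_eq_rhs[OF has_derivative_mult] simp: inner_add_left algebra_simps)
qed

lemma locally_C11_sum:
  "finite I \<Longrightarrow> (\<And>i. i \<in> I \<Longrightarrow> locally_C11 (f i)) \<Longrightarrow> locally_C11 (\<lambda>x. \<Sum>i\<in>I. f i x)"
  by (induction I rule: finite_induct) (auto intro: locally_C11_add locally_C11_const)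

section \<open>Gradients and gradient flows\<close>

lemma has_gradient_inner_eq_0_if_invariant:
  fixes f :: "'v::real_inner \<Rightarrow> real"
  assumes g: "has_gradient f g x" and invariant: "\<And>t. f (x + t *\<^sub>R e) = f x"
  shows "g \<bullet> e = 0"
proof -
  have "((\<lambda>t. x + t *\<^sub>R e) has_derivative (\<lambda>s. s *\<^sub>R e)) (at 0)"
    by (auto intro!: derivative_eq_intros)
  moreover have "(f has_derivative (\<lambda>h. g \<bullet> h)) (at (x + 0 *\<^sub>R e))"
    using g by (simp add: has_gradient_def)
  ultimately have "((\<lambda>t. f (x + t *\<^sub>R e)) has_derivative (\<lambda>s. g \<bullet> (s *\<^sub>R e))) (at 0)"
    by (rule has_derivative_compose)
  moreover have "((\<lambda>t. f (x + t *\<^sub>R e)) has_derivative (\<lambda>s. 0)) (at 0)"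
    unfolding invariant by (rule has_derivative_const)
  ultimately have "(\<lambda>s. g \<bullet> (s *\<^sub>R e)) = (\<lambda>s. 0)"
    by (rule has_derivative_unique)
  from fun_cong[OF this, of 1] show ?thesis by simp
qed

lemma has_gradient_compose_selfadjoint:
  fixes f :: "'v::real_inner \<Rightarrow> real"
  assumes "has_gradient f g (\<pi> x)" "bounded_linear \<pi>" "\<And>x y. \<pi> x \<bullet> y = x \<bullet> \<pi> y"
  shows "has_gradient (\<lambda>x. f (\<pi> x)) (\<pi> g) x"
  using has_derivative_compose[OF bounded_linear_imp_has_derivative[OF assms(2)]
      assms(1)[unfolded has_gradient_def]]
  unfolding has_gradient_def by (rule has_derivative_eq_rhs) (simp add: assms(3) fun_eq_iff)

lemma bounded_linear_image_const_if_derivative_in_kernel: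
  fixes X :: "real \<Rightarrow> 'a::real_normed_vector" and L :: "'a \<Rightarrow> 'b::real_normed_vector"
  assumes L: "bounded_linear L"
    and X: "\<And>t. 0 \<le> t \<Longrightarrow> (X has_vector_derivative v t) (at t within {0..})"
    and kernel: "\<And>t. 0 \<le> t \<Longrightarrow> L (v t) = 0"
    and "0 \<le> t"
  shows "L (X t) = L (X 0)"
proof -
  interpret L: bounded_linear L by (rule L)
  have deriv: "((\<lambda>s. L (X s)) has_derivative (\<lambda>h. 0)) (at s within {0..})" if "s \<in> {0..}" for s
  proof -
    have "(X has_derivative (\<lambda>h. h *\<^sub>R v s)) (at s within {0..})"
      using X that by (simp add: has_vector_derivative_def)
    from bounded_linear.has_derivative[OF L this]
    show ?thesis
      by (rule has_derivative_eq_rhs) (use kernel that in \<open>auto simp: L.scaleR\<close>)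
  qed
  show ?thesis
    by (rule has_derivative_zero_unique[where f="\<lambda>s. L (X s)", OF _ deriv]) (use \<open>0 \<le> t\<close> in auto)
qed

lemma gradient_flow_inner_const:
  assumes "gradient_flow f X" and orth: "\<And>x g. has_gradient f g x \<Longrightarrow> g \<bullet> e = 0" and "0 \<le> t"
  shows "X t \<bullet> e = X 0 \<bullet> e"
proof -
  obtain g where g: "\<And>t. 0 \<le> t \<Longrightarrow> has_gradient f (g t) (X t)"
    and X': "\<And>t. 0 \<le> t \<Longrightarrow> (X has_vector_derivative - g t) (at t within {0..})"
    using assms(1) unfolding gradient_flow_def by metis
  show ?thesis
  proof (rule bounded_linear_image_const_if_derivative_in_kernel[OF bounded_linear_inner_left X' _
        \<open>0 \<le> t\<close>])
    fix s :: real assume "0 \<le> s"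
    show "- g s \<bullet> e = 0" using orth[OF g[OF \<open>0 \<le> s\<close>]] by simp
  qed
qed

section \<open>Global existence of gradient flows\<close>

lemma at_within_atLeastAtMost_eq_atLeast:
  fixes a b t :: real
  assumes "t < b"
  shows "at t within {a..b} = at t within {a..}"
  by (rule at_within_nhd[of _ "{..<b}"]) (use assms in auto)

lemma continuous_on_atLeastI:
  fixes Y :: "real \<Rightarrow> 'a::topological_space"
  assumes "\<And>T. a \<le> T \<Longrightarrow> continuous_on {a..T} Y"
  shows "continuous_on {a..} Y"
  unfolding continuous_on_eq_continuous_within
proof
  fix t assume "t \<in> {a..}"
  then have "continuous (at t within {a..t+1}) Y"
    using assms[of "t+1"] by (auto simp: continuous_on_eq_continuous_within)
  then show "continuous (at t within {a..}) Y"
    by (simp add: at_within_atLeastAtMost_eq_atLeast)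
qed

lemma integral_has_vector_derivative_atLeast:
  fixes g :: "real \<Rightarrow> 'a::banach"
  assumes "continuous_on {a..} g" "a \<le> t"
  shows "((\<lambda>u. integral {a..u} g) has_vector_derivative g t) (at t within {a..})"
proof -
  have "continuous_on {a..t+1} g" using assms(1) by (rule continuous_on_subset) auto
  from integral_has_vector_derivative[OF this, of t] assms(2)
  show ?thesis by (simp add: at_within_atLeastAtMost_eq_atLeast)
qed

lemma continuous_on_integral_atLeast:
  fixes g :: "real \<Rightarrow> 'a::banach"
  assumes "continuous_on {a..} g"
  shows "continuous_on {a..} (\<lambda>t. integral {a..t} g)"
  unfolding continuous_on_eq_continuous_within
  using has_vector_derivative_continuous[OF integral_has_vector_derivative_atLeast[OF assms]]
  by auto

lemma integral_monomial:
  fixes t c :: real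
  assumes "0 \<le> t"
  shows "integral {0..t} (\<lambda>s. c * s ^ k) = c * t ^ Suc k / real (Suc k)"
proof -
  have "((\<lambda>s. c * s ^ k) has_integral
      (c * t ^ Suc k / real (Suc k) - c * 0 ^ Suc k / real (Suc k))) {0..t}"
    apply (rule fundamental_theorem_of_calculus[OF assms])
    apply (rule has_real_derivative_iff_has_vector_derivative[THEN iffD1])
    apply (rule derivative_eq_intros refl | simp)+
    done
  from integral_unique[OF this] show ?thesis by simp
qed

lemma uniform_limit_compose_lipschitz:
  assumes "uniform_limit S f g F" and "\<And>s. s \<in> S \<Longrightarrow> K-lipschitz_on UNIV (h s)"
  shows "uniform_limit S (\<lambda>n s. h s (f n s)) (\<lambda>s. h s (g s)) F"
proof (rule uniform_limitI)
  fix e :: real assume "0 < e"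
  then have "0 < e / (\<bar>K\<bar> + 1)" by simp
  with assms(1) have "\<forall>\<^sub>F n in F. \<forall>s\<in>S. dist (f n s) (g s) < e / (\<bar>K\<bar> + 1)"
    by (rule uniform_limitD)
  then show "\<forall>\<^sub>F n in F. \<forall>s\<in>S. dist (h s (f n s)) (h s (g s)) < e"
  proof (rule eventually_mono, intro ballI)
    fix n s assume close: "\<forall>s\<in>S. dist (f n s) (g s) < e / (\<bar>K\<bar> + 1)" and "s \<in> S"
    have "dist (h s (f n s)) (h s (g s)) \<le> K * dist (f n s) (g s)"
      using assms(2)[OF \<open>s \<in> S\<close>] by (rule lipschitz_onD) auto
    also have "\<dots> \<le> \<bar>K\<bar> * dist (f n s) (g s)"
      by (simp add: mult_right_mono)
    also have "\<dots> \<le> \<bar>K\<bar> * (e / (\<bar>K\<bar> + 1))"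
      using close \<open>s \<in> S\<close> by (intro mult_left_mono) (auto intro: less_imp_le)
    also have "\<dots> < e" using \<open>0 < e\<close> by (simp add: field_simps)
    finally show "dist (h s (f n s)) (h s (g s)) < e" .
  qed
qed

locale lipschitz_time_field =
  fixes F :: "real \<Rightarrow> 'a::euclidean_space \<Rightarrow> 'a"
  assumes continuous_along: "\<And>Y. continuous_on {0..} Y \<Longrightarrow> continuous_on {0..} (\<lambda>s. F s (Y s))"
    and lipschitz_on_bounded_time: "\<And>T. \<exists>K. \<forall>s\<in>{0..T}. K-lipschitz_on UNIV (F s)"
begin

primrec picard_iterate :: "'a \<Rightarrow> nat \<Rightarrow> real \<Rightarrow> 'a" where
  "picard_iterate x0 0 = (\<lambda>t. x0)"
| "picard_iterate x0 (Suc k) = (\<lambda>t. x0 + integral {0..t} (\<lambda>s. F s (picard_iterate x0 k s)))"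

declare picard_iterate.simps(2) [simp del] \<comment> \<open>otherwise simp unfolds every iterate down to \<open>x0\<close>\<close>

lemma picard_iterate_Suc:
  "picard_iterate x0 (Suc k) t = x0 + integral {0..t} (\<lambda>s. F s (picard_iterate x0 k s))"
  by (simp add: picard_iterate.simps)

lemma continuous_on_picard_iterate: "continuous_on {0..} (picard_iterate x0 k)"
  by (induction k)
    (auto simp: picard_iterate.simps
      intro!: continuous_intros continuous_on_integral_atLeast continuous_along)

lemma integrable_along_picard_iterate:
  "(\<lambda>s. F s (picard_iterate x0 k s)) integrable_on {0..t}"
  by (intro integrable_continuous_real continuous_on_subset[OF continuous_along]
      continuous_on_picard_iterate) auto

lemma picard_iterate_diff_bound:
  assumes K: "\<And>s. s \<in> {0..T} \<Longrightarrow> K-lipschitz_on UNIV (F s)"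
    and C: "\<And>t. t \<in> {0..T} \<Longrightarrow> norm (picard_iterate x0 1 t - x0) \<le> C"
    and "t \<in> {0..T}"
  shows "norm (picard_iterate x0 (Suc k) t - picard_iterate x0 k t) \<le> C * (K * t) ^ k / fact k"
  using \<open>t \<in> {0..T}\<close>
proof (induction k arbitrary: t)
  case 0
  then show ?case using C by simp
next
  case (Suc k)
  let ?Y = "picard_iterate x0"
  have "0 \<le> K" using K[of 0] lipschitz_on_nonneg Suc.prems by fastforce
  have "norm (?Y (Suc (Suc k)) t - ?Y (Suc k) t)
      = norm (integral {0..t} (\<lambda>s. F s (?Y (Suc k) s) - F s (?Y k s)))"
    unfolding picard_iterate_Suc[of x0 "Suc k" t] picard_iterate_Suc[of x0 k t]
    by (simp add: integral_diff integrable_along_picard_iterate)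
  also have "\<dots> \<le> integral {0..t} (\<lambda>s. (C * K ^ Suc k / fact k) * s ^ k)"
  proof (rule integral_norm_bound_integral)
    show "(\<lambda>s. F s (?Y (Suc k) s) - F s (?Y k s)) integrable_on {0..t}"
      by (intro integrable_diff integrable_along_picard_iterate)
    show "(\<lambda>s. (C * K ^ Suc k / fact k) * s ^ k) integrable_on {0..t}"
      by (intro integrable_continuous_real continuous_intros)
  next
    fix s assume s: "s \<in> {0..t}"
    then have "s \<in> {0..T}" using Suc.prems by auto
    then have "norm (F s (?Y (Suc k) s) - F s (?Y k s)) \<le> K * norm (?Y (Suc k) s - ?Y k s)"
      using lipschitz_onD[OF K] by (simp add: dist_norm)
    also have "\<dots> \<le> K * (C * (K * s) ^ k / fact k)"
      using Suc.IH[OF \<open>s \<in> {0..T}\<close>] \<open>0 \<le> K\<close> by (rule mult_left_mono)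
    also have "\<dots> = (C * K ^ Suc k / fact k) * s ^ k"
      by (simp add: power_mult_distrib)
    finally show "norm (F s (?Y (Suc k) s) - F s (?Y k s)) \<le> (C * K ^ Suc k / fact k) * s ^ k" .
  qed
  also have "\<dots> = C * (K * t) ^ Suc k / fact (Suc k)"
    using Suc.prems by (subst integral_monomial) (auto simp: power_mult_distrib field_simps)
  finally show ?case .
qed

text \<open>The limit is written as a telescoping series so that the Weierstrass M-test applies.\<close>

definition picard_limit :: "'a \<Rightarrow> real \<Rightarrow> 'a" where
  "picard_limit x0 t = x0 + (\<Sum>k. picard_iterate x0 (Suc k) t - picard_iterate x0 k t)"

lemma picard_iterate_telescope:
  "picard_iterate x0 n t = x0 + (\<Sum>k<n. picard_iterate x0 (Suc k) t - picard_iterate x0 k t)"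
  by (induction n) auto

lemma uniform_limit_picard_iterate:
  assumes "0 \<le> T"
  shows "uniform_limit {0..T} (picard_iterate x0) (picard_limit x0) sequentially"
proof -
  obtain K where K: "\<And>s. s \<in> {0..T} \<Longrightarrow> K-lipschitz_on UNIV (F s)"
    using lipschitz_on_bounded_time by blast
  have "0 \<in> {0..T}" using assms by simp
  from lipschitz_on_nonneg[OF K[OF this]] have "0 \<le> K" .
  have "compact ((\<lambda>t. picard_iterate x0 1 t - x0) ` {0..T})"
    by (intro compact_continuous_image continuous_on_diff continuous_on_const
        continuous_on_subset[OF continuous_on_picard_iterate]) auto
  then obtain C where C: "\<And>t. t \<in> {0..T} \<Longrightarrow> norm (picard_iterate x0 1 t - x0) \<le> C"
    by (meson bounded_iff compact_imp_bounded imageI)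
  from order_trans[OF norm_ge_zero C[OF \<open>0 \<in> {0..T}\<close>]] have "0 \<le> C" .
  have bound:
    "norm (picard_iterate x0 (Suc k) t - picard_iterate x0 k t) \<le> C * (K * T) ^ k / fact k"
    if "t \<in> {0..T}" for k t
  proof -
    have "C * (K * t) ^ k / fact k \<le> C * (K * T) ^ k / fact k"
      using that \<open>0 \<le> K\<close> \<open>0 \<le> C\<close>
      by (intro divide_right_mono mult_left_mono power_mono) auto
    moreover have
      "norm (picard_iterate x0 (Suc k) t - picard_iterate x0 k t) \<le> C * (K * t) ^ k / fact k"
      using K C that by (rule picard_iterate_diff_bound)
    ultimately show ?thesis by linarith
  qed
  have "summable (\<lambda>k. C * (K * T) ^ k / fact k)"
    using summable_mult[OF summable_exp[of "K * T"], of C] by (simp add: field_simps)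
  then have "uniform_limit {0..T}
      (\<lambda>n t. \<Sum>k<n. picard_iterate x0 (Suc k) t - picard_iterate x0 k t)
      (\<lambda>t. \<Sum>k. picard_iterate x0 (Suc k) t - picard_iterate x0 k t) sequentially"
    using bound by (rule Weierstrass_m_test[rotated])
  then have "uniform_limit {0..T}
      (\<lambda>n t. x0 + (\<Sum>k<n. picard_iterate x0 (Suc k) t - picard_iterate x0 k t))
      (\<lambda>t. x0 + (\<Sum>k. picard_iterate x0 (Suc k) t - picard_iterate x0 k t)) sequentially"
    by (intro uniform_limit_intros)
  then show ?thesis
    unfolding picard_limit_def picard_iterate_telescope[symmetric] .
qed

lemma continuous_on_picard_limit: "continuous_on {0..} (picard_limit x0)"
proof (rule continuous_on_atLeastI)
  fix T :: real assume "0 \<le> T"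
  have "\<forall>\<^sub>F n in sequentially. continuous_on {0..T} (picard_iterate x0 n)"
    using continuous_on_subset[OF continuous_on_picard_iterate] by (simp add: always_eventually)
  from uniform_limit_theorem[OF this uniform_limit_picard_iterate[OF \<open>0 \<le> T\<close>]]
  show "continuous_on {0..T} (picard_limit x0)" by simp
qed

lemma picard_limit_integral_equation:
  assumes "0 \<le> t"
  shows "picard_limit x0 t = x0 + integral {0..t} (\<lambda>s. F s (picard_limit x0 s))"
proof -
  obtain K where K: "\<And>s. s \<in> {0..t} \<Longrightarrow> K-lipschitz_on UNIV (F s)"
    using lipschitz_on_bounded_time by blast
  have lim: "uniform_limit {0..t} (\<lambda>n s. F s (picard_iterate x0 n s))
      (\<lambda>s. F s (picard_limit x0 s)) sequentially"
    using uniform_limit_picard_iterate[OF assms] K by (rule uniform_limit_compose_lipschitz)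
  have cont: "continuous_on {0..t} (\<lambda>s. F s (picard_iterate x0 n s))" for n
    using continuous_on_subset[OF continuous_along[OF continuous_on_picard_iterate]] by simp
  obtain I J where
    I: "\<And>n. ((\<lambda>s. F s (picard_iterate x0 n s)) has_integral I n) {0..t}"
    and J: "((\<lambda>s. F s (picard_limit x0 s)) has_integral J) {0..t}"
    and "I \<longlonglongrightarrow> J"
    using uniform_limit_integral[OF lim cont sequentially_bot] by blast
  then have "(\<lambda>n. picard_iterate x0 (Suc n) t) \<longlonglongrightarrow> x0 + J"
    by (simp add: picard_iterate_Suc integral_unique[OF I] tendsto_add)
  moreover have "(\<lambda>n. picard_iterate x0 (Suc n) t) \<longlonglongrightarrow> picard_limit x0 t"
    using tendsto_uniform_limitI[OF uniform_limit_picard_iterate[OF assms], of t] assms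
    by (intro LIMSEQ_Suc) simp
  ultimately show ?thesis
    using LIMSEQ_unique integral_unique[OF J] by metis
qed

lemma exists_solution:
  "\<exists>Y. Y 0 = x0 \<and> (\<forall>t\<ge>0. (Y has_vector_derivative F t (Y t)) (at t within {0..}))"
proof (intro exI conjI allI impI)
  show "picard_limit x0 0 = x0"
    using picard_limit_integral_equation[of 0] by simp
  fix t :: real assume "0 \<le> t"
  have "((\<lambda>u. x0 + integral {0..u} (\<lambda>s. F s (picard_limit x0 s))) has_vector_derivative
      F t (picard_limit x0 t)) (at t within {0..})"
    using integral_has_vector_derivative_atLeast[OF continuous_along[OF continuous_on_picard_limit]
        \<open>0 \<le> t\<close>]
    by (intro derivative_eq_intros) auto
  then show "(picard_limit x0 has_vector_derivative F t (picard_limit x0 t)) (at t within {0..})"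
    by (rule has_vector_derivative_transform[rotated 2])
      (use \<open>0 \<le> t\<close> picard_limit_integral_equation in auto)
qed

end

definition radial_retraction :: "real \<Rightarrow> 'a::real_normed_vector \<Rightarrow> 'a" where
  "radial_retraction \<rho> x = (\<rho> / max \<rho> (norm x)) *\<^sub>R x"

lemma radial_retraction_id: "0 < \<rho> \<Longrightarrow> norm x \<le> \<rho> \<Longrightarrow> radial_retraction \<rho> x = x"
  by (simp add: radial_retraction_def max_def)

lemma norm_radial_retraction_le: "0 < \<rho> \<Longrightarrow> norm (radial_retraction \<rho> x) \<le> \<rho>"
  by (auto simp: radial_retraction_def max_def field_simps)

lemma radial_retraction_eq_closest_point:
  fixes x :: "'a::euclidean_space"
  assumes "0 < \<rho>"
  shows "radial_retraction \<rho> x = closest_point (cball 0 \<rho>) x"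
proof (rule closest_point_unique)
  show "radial_retraction \<rho> x \<in> cball 0 \<rho>"
    using norm_radial_retraction_le[OF assms] by simp
  show "\<forall>z\<in>cball 0 \<rho>. dist x (radial_retraction \<rho> x) \<le> dist x z"
  proof
    fix z :: 'a assume z: "z \<in> cball 0 \<rho>"
    show "dist x (radial_retraction \<rho> x) \<le> dist x z"
    proof (cases "norm x \<le> \<rho>")
      case True then show ?thesis by (simp add: radial_retraction_id assms)
    next
      case False
      then have "x - radial_retraction \<rho> x = (1 - \<rho> / norm x) *\<^sub>R x"
        by (simp add: radial_retraction_def max_def algebra_simps)
      then have "dist x (radial_retraction \<rho> x) = \<bar>1 - \<rho> / norm x\<bar> * norm x"
        by (simp add: dist_norm)
      also have "\<dots> = norm x - \<rho>"
        using False assms by (auto simp: field_simps abs_if)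
      also have "\<dots> \<le> dist x z"
        using z norm_triangle_ineq2[of x z] by (simp add: dist_norm)
      finally show ?thesis .
    qed
  qed
qed auto

lemma lipschitz_radial_retraction:
  fixes \<rho> :: real
  assumes "0 < \<rho>"
  shows "1-lipschitz_on UNIV (radial_retraction \<rho> :: 'a::euclidean_space \<Rightarrow> 'a)"
  using closest_point_lipschitz[of "cball (0::'a) \<rho>"] assms
  by (intro lipschitz_onI) (simp_all add: radial_retraction_eq_closest_point)

lemma first_hitting_time:
  fixes \<phi> :: "real \<Rightarrow> real"
  assumes "continuous_on {0..} \<phi>" "\<phi> 0 < 0" "0 \<le> t" "0 \<le> \<phi> t"
  obtains \<tau> where "0 < \<tau>" "0 \<le> \<phi> \<tau>" "\<And>s. 0 \<le> s \<Longrightarrow> s < \<tau> \<Longrightarrow> \<phi> s < 0"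
proof -
  define A where "A = {0..} \<inter> \<phi> -` {0..}"
  have "closed A"
    unfolding A_def by (intro continuous_closed_preimage assms(1)) auto
  moreover have "t \<in> A" "bdd_below A"
    using assms(3,4) by (auto simp: A_def)
  ultimately have "Inf A \<in> A"
    using closed_contains_Inf by blast
  moreover have "\<phi> s < 0" if "0 \<le> s" "s < Inf A" for s
    using cInf_lower[OF _ \<open>bdd_below A\<close>, of s] that by (force simp: A_def)
  moreover have "Inf A \<noteq> 0"
    using \<open>Inf A \<in> A\<close> assms(2) by (auto simp: A_def)
  ultimately show ?thesis
    by (intro that[of "Inf A"]) (auto simp: A_def)
qed

lemma descent_path_displacement_bound:
  fixes f :: "'a::real_inner \<Rightarrow> real"
  assumes nonneg: "\<And>x. 0 \<le> f x" and grad: "\<And>x. has_gradient f (G x) x"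
    and Y: "continuous_on {0..\<tau>} Y"
    and Y': "\<And>s. 0 < s \<Longrightarrow> s < \<tau> \<Longrightarrow> (Y has_vector_derivative - G (Y s)) (at s)"
    and "0 \<le> \<tau>"
  shows "norm (Y \<tau> - Y 0) \<le> (f (Y 0) + \<tau>) / 2"
proof -
  define e where "e = sgn (Y \<tau> - Y 0)"
  \<comment> \<open>\<open>h\<close> is nonincreasing since \<open>-e \<bullet> g \<le> \<parallel>g\<parallel> \<le> (\<parallel>g\<parallel>\<^sup>2 + 1) / 2\<close> for \<open>g = G (Y s)\<close>.\<close>
  define h where "h s = e \<bullet> Y s + f (Y s) / 2 - s / 2" for s
  have "continuous_on UNIV f"
    using grad unfolding has_gradient_def
    by (meson continuous_at_imp_continuous_on has_derivative_continuous)
  then have "continuous_on {0..\<tau>} h"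
    unfolding h_def by (intro continuous_intros Y continuous_on_compose2[OF _ Y]) auto
  moreover have "\<exists>l. (h has_real_derivative l) (at s) \<and> l \<le> 0" if "0 < s" "s < \<tau>" for s
  proof (intro exI conjI)
    let ?g = "G (Y s)"
    have "(Y has_derivative (\<lambda>u. u *\<^sub>R - ?g)) (at s)"
      using Y'[OF that] by (simp add: has_vector_derivative_def)
    from has_derivative_compose[OF this grad[unfolded has_gradient_def]]
    have "((\<lambda>s. f (Y s)) has_derivative (\<lambda>u. ?g \<bullet> (u *\<^sub>R - ?g))) (at s)" .
    with Y'[OF that] show "(h has_real_derivative - (e \<bullet> ?g) - ?g \<bullet> ?g / 2 - 1 / 2) (at s)"
      unfolding h_def has_field_derivative_def has_vector_derivative_def
      by (auto intro!: derivative_eq_intros simp: algebra_simps)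
    have "- (e \<bullet> ?g) \<le> norm ?g"
      using Cauchy_Schwarz_ineq2[of e ?g] norm_sgn[of "Y \<tau> - Y 0"]
      by (cases "Y \<tau> = Y 0") (auto simp: e_def mult_left_le_one_le)
    moreover have "0 \<le> (norm ?g - 1)\<^sup>2" by simp
    ultimately show "- (e \<bullet> ?g) - ?g \<bullet> ?g / 2 - 1 / 2 \<le> 0"
      by (simp add: power2_eq_square algebra_simps flip: power2_norm_eq_inner)
  qed
  ultimately have "h \<tau> \<le> h 0"
    using DERIV_nonpos_imp_decreasing_open[OF \<open>0 \<le> \<tau>\<close>] by blast
  moreover have "e \<bullet> (Y \<tau> - Y 0) = norm (Y \<tau> - Y 0)"
    by (cases "Y \<tau> = Y 0")
      (simp_all add: e_def sgn_div_norm inner_commute power2_eq_square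
        flip: power2_norm_eq_inner)
  ultimately show ?thesis
    using nonneg[of "Y \<tau>"] by (simp add: h_def inner_diff_right)
qed

lemma lipschitz_time_field_radial_truncation:
  fixes G :: "'a::euclidean_space \<Rightarrow> 'a"
  assumes G: "locally_lipschitz G" and \<rho>: "continuous_on {0..} \<rho>"
    and \<rho>_pos: "\<And>s. 0 \<le> s \<Longrightarrow> 0 < \<rho> s" and \<rho>_mono: "\<And>s t. s \<le> t \<Longrightarrow> \<rho> s \<le> \<rho> t"
  shows "lipschitz_time_field (\<lambda>s x. - G (radial_retraction (\<rho> s) x))"
proof
  fix Y :: "real \<Rightarrow> 'a" assume "continuous_on {0..} Y"
  then have "continuous_on {0..} (\<lambda>s. radial_retraction (\<rho> s) (Y s))"
    unfolding radial_retraction_def using \<rho>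
    by (intro continuous_intros) (auto simp: max_def dest!: \<rho>_pos)
  then show "continuous_on {0..} (\<lambda>s. - G (radial_retraction (\<rho> s) (Y s)))"
    by (intro continuous_intros continuous_on_compose2[OF locally_lipschitz_continuous_on[OF G]])
      auto
next
  fix T :: real
  obtain K where K: "K-lipschitz_on (cball 0 (\<rho> T)) G"
    using G by (rule locally_lipschitzE)
  have "(K * 1)-lipschitz_on UNIV (\<lambda>x. - G (radial_retraction (\<rho> s) x))" if "s \<in> {0..T}" for s
  proof -
    have "norm (radial_retraction (\<rho> s) x) \<le> \<rho> T" for x
      using norm_radial_retraction_le[OF \<rho>_pos, of s x] \<rho>_mono[of s T] that by simp
    then have "radial_retraction (\<rho> s) ` UNIV \<subseteq> cball 0 (\<rho> T)" by auto
    with K have "K-lipschitz_on (radial_retraction (\<rho> s) ` UNIV) G"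
      by (rule lipschitz_on_subset)
    with lipschitz_radial_retraction[OF \<rho>_pos] that
    have "(K * 1)-lipschitz_on UNIV (\<lambda>x. G (radial_retraction (\<rho> s) x))"
      by (intro lipschitz_on_compose2) auto
    then show ?thesis by (rule lipschitz_on_minus)
  qed
  then show "\<exists>K. \<forall>s\<in>{0..T}. K-lipschitz_on UNIV (\<lambda>x. - G (radial_retraction (\<rho> s) x))"
    by blast
qed

lemma truncated_descent_stays_inside:
  fixes f :: "'a::euclidean_space \<Rightarrow> real"
  assumes nonneg: "\<And>x. 0 \<le> f x" and grad: "\<And>x. has_gradient f (G x) x"
    and \<rho>_def: "\<And>s. \<rho> s = norm (Y 0) + f (Y 0) / 2 + 1 + s / 2"
    and Y': "\<And>t. 0 \<le> t \<Longrightarrow>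
      (Y has_vector_derivative - G (radial_retraction (\<rho> t) (Y t))) (at t within {0..})"
    and t: "0 \<le> t"
  shows "norm (Y t) < \<rho> t"
proof (rule ccontr)
  assume "\<not> norm (Y t) < \<rho> t"
  then have exit: "0 \<le> norm (Y t) - \<rho> t" by simp
  have \<rho>_pos: "0 < \<rho> s" if "0 \<le> s" for s
    using nonneg[of "Y 0"] norm_ge_zero[of "Y 0"] that unfolding \<rho>_def by linarith
  have "continuous_on {0..} Y"
    unfolding continuous_on_eq_continuous_within
    using has_vector_derivative_continuous[OF Y'] by auto
  then have cont: "continuous_on {0..} (\<lambda>s. norm (Y s) - \<rho> s)"
    unfolding \<rho>_def by (intro continuous_intros) auto
  have start: "norm (Y 0) - \<rho> 0 < 0"
    using nonneg[of "Y 0"] by (simp add: \<rho>_def)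
  obtain \<tau> where \<tau>: "0 < \<tau>" "0 \<le> norm (Y \<tau>) - \<rho> \<tau>"
    and before: "\<And>s. 0 \<le> s \<Longrightarrow> s < \<tau> \<Longrightarrow> norm (Y s) - \<rho> s < 0"
    using first_hitting_time[OF cont start t exit] by blast
  have "norm (Y \<tau> - Y 0) \<le> (f (Y 0) + \<tau>) / 2"
  proof (rule descent_path_displacement_bound[OF nonneg grad])
    show "continuous_on {0..\<tau>} Y"
      using \<open>continuous_on {0..} Y\<close> by (rule continuous_on_subset) auto
    fix s assume s: "0 < s" "s < \<tau>"
    then have "radial_retraction (\<rho> s) (Y s) = Y s"
      using before[of s] \<rho>_pos[of s] by (simp add: radial_retraction_id)
    moreover have "at s within {0..} = at s"
      using s by (intro at_within_interior) auto
    ultimately show "(Y has_vector_derivative - G (Y s)) (at s)"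
      using Y'[of s] s by simp
  qed (use \<tau> in simp)
  then have "norm (Y \<tau>) < \<rho> \<tau>"
    using norm_triangle_sub[of "Y \<tau>" "Y 0"] by (simp add: \<rho>_def)
  with \<tau> show False by simp
qed

lemma gradient_flow_exists:
  fixes f :: "'a::euclidean_space \<Rightarrow> real"
  assumes nonneg: "\<And>x. 0 \<le> f x" and grad: "\<And>x. has_gradient f (G x) x"
    and G: "locally_lipschitz G"
  shows "\<exists>X. X 0 = x0 \<and> (\<forall>t\<ge>0. (X has_vector_derivative - G (X t)) (at t within {0..}))"
proof -
  \<comment> \<open>By the displacement bound a descent path never reaches this radius.\<close>
  define \<rho> where "\<rho> s = norm x0 + f x0 / 2 + 1 + s / 2" for s
  have \<rho>_pos: "0 < \<rho> s" if "0 \<le> s" for s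
    using nonneg[of x0] norm_ge_zero[of x0] that unfolding \<rho>_def by linarith
  have "continuous_on {0..} \<rho>"
    unfolding \<rho>_def by (intro continuous_intros) auto
  moreover have "\<rho> s \<le> \<rho> t" if "s \<le> t" for s t
    using that by (simp add: \<rho>_def)
  ultimately interpret lipschitz_time_field "\<lambda>s x. - G (radial_retraction (\<rho> s) x)"
    using G \<rho>_pos by (intro lipschitz_time_field_radial_truncation)
  obtain Y where Y0: "Y 0 = x0" and Y': "\<And>t. 0 \<le> t \<Longrightarrow>
      (Y has_vector_derivative - G (radial_retraction (\<rho> t) (Y t))) (at t within {0..})"
    using exists_solution by blast
  have "radial_retraction (\<rho> t) (Y t) = Y t" if "0 \<le> t" for t
    using truncated_descent_stays_inside[OF nonneg grad _ Y' that] \<rho>_pos[OF that]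
    by (simp add: radial_retraction_id \<rho>_def Y0 less_imp_le)
  with Y0 Y' show ?thesis by auto
qed

lemma gradient_flow_in_invariant_subspace:
  fixes f :: "'a::euclidean_space \<Rightarrow> real" and \<pi> :: "'a \<Rightarrow> 'a"
  assumes nonneg: "\<And>x. 0 \<le> f x" and grad: "\<And>x. has_gradient f (G x) x"
    and G: "locally_lipschitz G"
    and \<pi>: "linear \<pi>" "\<And>x y. \<pi> x \<bullet> y = x \<bullet> \<pi> y" "\<And>x. \<pi> (\<pi> x) = \<pi> x"
    and invariant: "\<And>x. \<pi> x = x \<Longrightarrow> \<pi> (G x) = G x"
    and "\<pi> x0 = x0"
  shows "\<exists>X. gradient_flow f X \<and> X 0 = x0 \<and> (\<forall>t\<ge>0. \<pi> (X t) = X t)"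
proof -
  have "bounded_linear \<pi>"
    using \<pi>(1) by (simp add: linear_conv_bounded_linear)
  \<comment> \<open>Follow the gradient flow of \<open>f \<circ> \<pi>\<close>: it never leaves the range of \<open>\<pi>\<close>, where its
      gradient \<open>\<pi> (G x)\<close> is \<open>G x\<close>.\<close>
  define H where "H x = \<pi> (G (\<pi> x))" for x
  have "has_gradient (\<lambda>x. f (\<pi> x)) (H x) x" for x
    unfolding H_def using grad \<open>bounded_linear \<pi>\<close> \<pi>(2) by (rule has_gradient_compose_selfadjoint)
  moreover have "locally_lipschitz H"
    using bounded_linear_locally_lipschitz[OF \<open>bounded_linear \<pi>\<close>] G
    unfolding H_def by (metis locally_lipschitz_compose)
  ultimately obtain X where X0: "X 0 = x0"
    and X': "\<And>t. 0 \<le> t \<Longrightarrow> (X has_vector_derivative - H (X t)) (at t within {0..})"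
    using gradient_flow_exists[of "\<lambda>x. f (\<pi> x)"] nonneg by blast
  have in_subspace: "\<pi> (X t) = X t" if "0 \<le> t" for t
  proof -
    have "bounded_linear (\<lambda>x. x - \<pi> x)"
      using \<open>bounded_linear \<pi>\<close> by (intro bounded_linear_sub bounded_linear_ident)
    moreover have "- H x - \<pi> (- H x) = 0" for x
      using linear_neg[OF \<pi>(1), of "H x"] \<pi>(3) by (simp add: H_def)
    ultimately have "X t - \<pi> (X t) = X 0 - \<pi> (X 0)"
      using bounded_linear_image_const_if_derivative_in_kernel[OF _ X'] that by blast
    then show ?thesis using \<open>\<pi> x0 = x0\<close> by (simp add: X0)
  qed
  have "gradient_flow f X"
    unfolding gradient_flow_def
  proof (intro allI impI exI conjI)
    fix t :: real assume "0 \<le> t"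
    show "has_gradient f (G (X t)) (X t)" by (rule grad)
    have "H (X t) = G (X t)"
      using in_subspace[OF \<open>0 \<le> t\<close>] invariant by (simp add: H_def)
    with X'[OF \<open>0 \<le> t\<close>] show "(X has_vector_derivative - G (X t)) (at t within {0..})"
      by simp
  qed
  with X0 in_subspace show ?thesis by blast
qed

section \<open>Square-integrable random variables\<close>

definition has_sixth_moment :: "'m measure \<Rightarrow> ('m \<Rightarrow> real) \<Rightarrow> bool" where
  "has_sixth_moment M f \<longleftrightarrow> f \<in> borel_measurable M \<and> integrable M (\<lambda>z. f z ^ 6)"

definition square_integrable :: "'m measure \<Rightarrow> ('m \<Rightarrow> real) \<Rightarrow> bool" where
  "square_integrable M f \<longleftrightarrow> f \<in> borel_measurable M \<and> integrable M (\<lambda>z. (f z)\<^sup>2)"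

lemma has_sixth_moment_const: "finite_measure M \<Longrightarrow> has_sixth_moment M (\<lambda>z. c)"
  unfolding has_sixth_moment_def by (simp add: finite_measure.integrable_const)

lemma has_sixth_moment_cmult: "has_sixth_moment M f \<Longrightarrow> has_sixth_moment M (\<lambda>z. c * f z)"
  unfolding has_sixth_moment_def by (auto simp: power_mult_distrib)

lemma has_sixth_moment_vec_nth:
  fixes f :: "'m \<Rightarrow> real ^ 'n"
  assumes "f \<in> borel_measurable M" "integrable M (\<lambda>z. norm (f z) ^ 6)"
  shows "has_sixth_moment M (\<lambda>z. f z $ i)"
  unfolding has_sixth_moment_def
proof
  show "(\<lambda>z. f z $ i) \<in> borel_measurable M"
    using assms(1) by (rule measurable_compose[OF _ borel_measurable_nth])
  moreover have "\<bar>f z $ i\<bar> ^ 6 \<le> norm (f z) ^ 6" for z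
    by (intro power_mono component_le_norm_cart) simp
  then have "AE z in M. norm ((f z $ i) ^ 6) \<le> norm (norm (f z) ^ 6)"
    by (simp add: power_even_abs)
  ultimately show "integrable M (\<lambda>z. (f z $ i) ^ 6)"
    using assms(2) by (auto intro: Bochner_Integration.integrable_bound)
qed

lemma square_integrable_mult3:
  assumes "has_sixth_moment M f" "has_sixth_moment M g" "has_sixth_moment M h"
  shows "square_integrable M (\<lambda>z. f z * g z * h z)"
proof -
  have [measurable]: "f \<in> borel_measurable M" "g \<in> borel_measurable M" "h \<in> borel_measurable M"
    using assms by (simp_all add: has_sixth_moment_def)
  have "(a * b * c)\<^sup>2 \<le> a ^ 6 + b ^ 6 + c ^ 6" for a b c :: real
  proof -
    define m where "m = max \<bar>a\<bar> (max \<bar>b\<bar> \<bar>c\<bar>)"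
    have "(a * b * c)\<^sup>2 = (\<bar>a\<bar> * \<bar>b\<bar> * \<bar>c\<bar>)\<^sup>2" by (simp add: power_mult_distrib)
    also have "\<dots> \<le> (m * m * m)\<^sup>2"
      by (intro power_mono mult_mono) (auto simp: m_def)
    also have "\<dots> = m ^ 6" by (simp add: power2_eq_square eval_nat_numeral)
    also have "\<dots> \<le> a ^ 6 + b ^ 6 + c ^ 6"
      using power_even_abs[of 6 a] power_even_abs[of 6 b] power_even_abs[of 6 c]
        zero_le_even_power[of 6 a] zero_le_even_power[of 6 b] zero_le_even_power[of 6 c]
      unfolding m_def max_def by (auto split: if_splits)
    finally show ?thesis .
  qed
  then have "AE z in M. norm ((f z * g z * h z)\<^sup>2) \<le> norm (f z ^ 6 + g z ^ 6 + h z ^ 6)"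
    by (simp add: zero_le_even_power)
  moreover have "integrable M (\<lambda>z. f z ^ 6 + g z ^ 6 + h z ^ 6)"
    using assms by (simp add: has_sixth_moment_def)
  ultimately show ?thesis
    unfolding square_integrable_def
    by (auto intro: Bochner_Integration.integrable_bound)
qed

lemma square_integrable_add:
  assumes "square_integrable M f" "square_integrable M g"
  shows "square_integrable M (\<lambda>z. f z + g z)"
proof -
  have "(a + b)\<^sup>2 \<le> 2 * a\<^sup>2 + 2 * b\<^sup>2" for a b :: real
    using zero_le_power2[of "a - b"] by (simp add: power2_eq_square algebra_simps)
  then have "AE z in M. norm ((f z + g z)\<^sup>2) \<le> norm (2 * (f z)\<^sup>2 + 2 * (g z)\<^sup>2)"
    by simp
  moreover have [measurable]: "f \<in> borel_measurable M" "g \<in> borel_measurable M"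
    using assms by (simp_all add: square_integrable_def)
  moreover have "integrable M (\<lambda>z. 2 * (f z)\<^sup>2 + 2 * (g z)\<^sup>2)"
    using assms by (simp add: square_integrable_def)
  ultimately show ?thesis
    unfolding square_integrable_def
    by (auto intro: Bochner_Integration.integrable_bound)
qed

lemma square_integrable_cmult: "square_integrable M f \<Longrightarrow> square_integrable M (\<lambda>z. c * f z)"
  unfolding square_integrable_def by (auto simp: power_mult_distrib)

lemma square_integrable_diff:
  "square_integrable M f \<Longrightarrow> square_integrable M g \<Longrightarrow> square_integrable M (\<lambda>z. f z - g z)"
  using square_integrable_add[of M f "\<lambda>z. -1 * g z"] square_integrable_cmult[of M g "-1"] by simp

lemma square_integrable_sum:
  "finite I \<Longrightarrow> (\<And>i. i \<in> I \<Longrightarrow> square_integrable M (f i)) \<Longrightarrow> square_integrable M (\<lambda>z. \<Sum>i\<in>I. f i z)"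
proof (induction I rule: finite_induct)
  case empty
  then show ?case by (simp add: square_integrable_def)
next
  case (insert i I)
  then show ?case by (simp add: square_integrable_add)
qed

lemma integrable_mult_if_square_integrable:
  assumes "square_integrable M f" "square_integrable M g"
  shows "integrable M (\<lambda>z. f z * g z)"
proof -
  have "\<bar>a * b\<bar> \<le> a\<^sup>2 + b\<^sup>2" for a b :: real
  proof -
    have "2 * (\<bar>a\<bar> * \<bar>b\<bar>) \<le> a\<^sup>2 + b\<^sup>2"
      using zero_le_power2[of "\<bar>a\<bar> - \<bar>b\<bar>"] by (simp add: power2_eq_square algebra_simps)
    moreover have "0 \<le> \<bar>a\<bar> * \<bar>b\<bar>" by simp
    ultimately show ?thesis unfolding abs_mult by linarith
  qed
  then have "AE z in M. norm (f z * g z) \<le> norm ((f z)\<^sup>2 + (g z)\<^sup>2)"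
    by simp
  moreover have [measurable]: "f \<in> borel_measurable M" "g \<in> borel_measurable M"
    using assms by (simp_all add: square_integrable_def)
  moreover have "integrable M (\<lambda>z. (f z)\<^sup>2 + (g z)\<^sup>2)"
    using assms by (simp add: square_integrable_def)
  ultimately show ?thesis
    by (auto intro: Bochner_Integration.integrable_bound)
qed

lemma locally_C11_expected_sum_squares:
  fixes u :: "'j \<Rightarrow> 'm \<Rightarrow> real" and \<beta> :: "'t \<Rightarrow> 'm \<Rightarrow> real"
    and q :: "'j \<Rightarrow> 't \<Rightarrow> 'v::real_inner \<Rightarrow> real"
  assumes "finite J" "finite T"
    and u: "\<And>j. j \<in> J \<Longrightarrow> square_integrable M (u j)"
    and \<beta>: "\<And>t. t \<in> T \<Longrightarrow> square_integrable M (\<beta> t)"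
    and q: "\<And>j t. j \<in> J \<Longrightarrow> t \<in> T \<Longrightarrow> locally_C11 (q j t)"
  shows "locally_C11 (\<lambda>x. \<integral>z. (\<Sum>j\<in>J. (u j z + (\<Sum>t\<in>T. q j t x * \<beta> t z))\<^sup>2) \<partial>M)"
proof -
  have square: "(a + (\<Sum>t\<in>T. c t * b t))\<^sup>2 =
      a * a + (\<Sum>t\<in>T. c t * (2 * (a * b t))) + (\<Sum>t\<in>T. \<Sum>t'\<in>T. (c t * c t') * (b t * b t'))"
    for a :: real and b c :: "'t \<Rightarrow> real"
    by (simp add: power2_eq_square algebra_simps sum_distrib_left sum_distrib_right sum.distrib
        sum_product mult.left_commute)
  have int_uu: "integrable M (\<lambda>z. u j z * u j z)" if "j \<in> J" for j
    using u[OF that] u[OF that] by (rule integrable_mult_if_square_integrable)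
  have int_u\<beta>: "integrable M (\<lambda>z. 2 * (u j z * \<beta> t z))" if "j \<in> J" "t \<in> T" for j t
    using integrable_mult_if_square_integrable[OF u[OF that(1)] \<beta>[OF that(2)]] by simp
  have int_\<beta>\<beta>: "integrable M (\<lambda>z. \<beta> t z * \<beta> t' z)" if "t \<in> T" "t' \<in> T" for t t'
    using \<beta>[OF that(1)] \<beta>[OF that(2)] by (rule integrable_mult_if_square_integrable)
  have "(\<integral>z. (\<Sum>j\<in>J. (u j z + (\<Sum>t\<in>T. q j t x * \<beta> t z))\<^sup>2) \<partial>M) =
      (\<Sum>j\<in>J. (\<integral>z. u j z * u j z \<partial>M) + (\<Sum>t\<in>T. q j t x * (\<integral>z. 2 * (u j z * \<beta> t z) \<partial>M))
        + (\<Sum>t\<in>T. \<Sum>t'\<in>T. (q j t x * q j t' x) * (\<integral>z. \<beta> t z * \<beta> t' z \<partial>M)))" for x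
    unfolding square using int_uu int_u\<beta> int_\<beta>\<beta>
    by (simp add: integral_sum integrable_sum integral_add integrable_mult_right)
  moreover have "locally_C11 (\<lambda>x. \<Sum>j\<in>J. (\<integral>z. u j z * u j z \<partial>M)
      + (\<Sum>t\<in>T. q j t x * (\<integral>z. 2 * (u j z * \<beta> t z) \<partial>M))
      + (\<Sum>t\<in>T. \<Sum>t'\<in>T. (q j t x * q j t' x) * (\<integral>z. \<beta> t z * \<beta> t' z \<partial>M)))"
    using assms(1,2) q
    by (intro locally_C11_sum locally_C11_add locally_C11_mult locally_C11_const) auto
  ultimately show ?thesis by simp
qed

section \<open>Linear self-attention on SARSA prompts\<close>

definition prompt_moment ::
    "real \<Rightarrow> nat \<Rightarrow> ('s, 'a, 'd::finite) sample \<Rightarrow> 'd idx \<Rightarrow> 'd idx \<Rightarrow> 'd idx \<Rightarrow> real" where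
  "prompt_moment \<gamma> n z a b c =
     (1 / real n) * (\<Sum>k\<le>n. prompt \<gamma> n z k $ a * prompt \<gamma> n z n $ b * prompt \<gamma> n z k $ c)"

lemma TF_prompt_expand:
  "TF n P V (prompt \<gamma> n z) $ j = wvec z $ j +
     (\<Sum>(a, b, c)\<in>UNIV. P $ a $ b * V $ Inr (Inr j) $ c * prompt_moment \<gamma> n z a b c)"
proof -
  let ?H = "prompt \<gamma> n z"
  have "TF n P V ?H $ j = wvec z $ j +
      (1 / real n) * (\<Sum>k\<le>n. (\<Sum>a\<in>UNIV. ?H k $ a * (\<Sum>b\<in>UNIV. P $ a $ b * ?H n $ b)) *
        (\<Sum>c\<in>UNIV. V $ Inr (Inr j) $ c * ?H k $ c))"
    by (simp add: TF_def lsa_def prompt_def wcol_def inner_vec_def matrix_vector_mult_def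
        sum_component)
  also have "\<dots> = wvec z $ j +
      (\<Sum>a\<in>UNIV. \<Sum>b\<in>UNIV. \<Sum>c\<in>UNIV. P $ a $ b * V $ Inr (Inr j) $ c * prompt_moment \<gamma> n z a b c)"
    by (simp add: prompt_moment_def sum_distrib_left sum_distrib_right mult_ac
        sum.swap[where A = "{..n}"])
  also have "\<dots> = wvec z $ j +
      (\<Sum>(a, b, c)\<in>UNIV. P $ a $ b * V $ Inr (Inr j) $ c * prompt_moment \<gamma> n z a b c)"
    by (simp add: sum.cartesian_product flip: UNIV_Times_UNIV)
  finally show ?thesis .
qed

text \<open>The context columns of the prompt vanish in the lower \<open>d+1\<close> coordinates and the query
  column vanishes in the upper \<open>2d+1\<close>.\<close>

lemma prompt_moment_eq_0:
  assumes "isl b \<or> isl a \<noteq> isl c"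
  shows "prompt_moment \<gamma> n z a b c = 0"
proof -
  have "prompt \<gamma> n z k $ a * prompt \<gamma> n z n $ b * prompt \<gamma> n z k $ c = 0" if "k \<le> n" for k
  proof (cases "k = n")
    case True
    then show ?thesis
      using assms by (cases a; cases b; cases c) (auto simp: prompt_def wcol_def)
  next
    case False
    then show ?thesis
      using assms that by (cases a; cases b; cases c) (auto simp: prompt_def xcol_def wcol_def)
  qed
  then show ?thesis
    unfolding prompt_moment_def by (subst sum.neutral) auto
qed

lemma TF_prompt_eqI:
  assumes "\<And>j a b c. \<not> isl b \<Longrightarrow> isl a = isl c \<Longrightarrow>
      P $ a $ b * V $ Inr (Inr j) $ c = P' $ a $ b * V' $ Inr (Inr j) $ c"
  shows "TF n P V (prompt \<gamma> n z) = TF n P' V' (prompt \<gamma> n z)"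
proof -
  have "P $ a $ b * V $ Inr (Inr j) $ c * prompt_moment \<gamma> n z a b c =
      P' $ a $ b * V' $ Inr (Inr j) $ c * prompt_moment \<gamma> n z a b c" for j a b c
    using assms[of b a c j] prompt_moment_eq_0[of b a c \<gamma> n z] by fastforce
  then have "(\<lambda>(a, b, c). P $ a $ b * V $ Inr (Inr j) $ c * prompt_moment \<gamma> n z a b c) =
      (\<lambda>(a, b, c). P' $ a $ b * V' $ Inr (Inr j) $ c * prompt_moment \<gamma> n z a b c)" for j
    by (simp add: fun_eq_iff)
  then show ?thesis
    by (simp add: vec_eq_iff TF_prompt_expand)
qed

lemma inner_Pair_axis_axis:
  fixes x :: "(real ^ 'n ^ 'm) \<times> (real ^ 'k ^ 'l)"
  shows "x \<bullet> (axis i (axis j 1), 0) = fst x $ i $ j"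
    and "x \<bullet> (0, axis i' (axis j' 1)) = snd x $ i' $ j'"
  by (simp_all add: inner_prod_def inner_axis)

lemma pop_loss_eqI:
  fixes M :: "('s, 'a, 'd::finite) sample measure"
  assumes "\<And>z :: ('s, 'a, 'd) sample.
      TF n (fst x) (snd x) (prompt \<gamma> n z) = TF n (fst y) (snd y) (prompt \<gamma> n z)"
  shows "pop_loss \<gamma> \<alpha> n M x = pop_loss \<gamma> \<alpha> n M y"
  unfolding pop_loss_def by (simp only: assms)

lemma TF_prompt_eq_if_relevant_blocks_eq:
  assumes "\<forall>i j. \<not> P_irrel i j \<longrightarrow> P $ i $ j = P' $ i $ j"
    and "\<forall>i j. \<not> V_irrel i j \<longrightarrow> V $ i $ j = V' $ i $ j"
  shows "TF n P V (prompt \<gamma> n z) = TF n P' V' (prompt \<gamma> n z)"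
  by (rule TF_prompt_eqI) (simp add: assms P_irrel_def V_irrel_def)

lemma gradient_pop_loss_irrelevant_eq_0:
  assumes g: "has_gradient (pop_loss \<gamma> \<alpha> n M) g x"
  shows "P_irrel i j \<Longrightarrow> fst g $ i $ j = 0" and "V_irrel i j \<Longrightarrow> snd g $ i $ j = 0"
proof -
  assume "P_irrel i j"
  have "g \<bullet> (axis i (axis j 1), 0) = 0"
  proof (rule has_gradient_inner_eq_0_if_invariant[OF g])
    fix t :: real
    show "pop_loss \<gamma> \<alpha> n M (x + t *\<^sub>R (axis i (axis j 1), 0)) = pop_loss \<gamma> \<alpha> n M x"
      by (intro pop_loss_eqI TF_prompt_eq_if_relevant_blocks_eq)
        (use \<open>P_irrel i j\<close> in \<open>auto simp: axis_def\<close>)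
  qed
  then show "fst g $ i $ j = 0" by (simp add: inner_Pair_axis_axis)
next
  assume "V_irrel i j"
  have "g \<bullet> (0, axis i (axis j 1)) = 0"
  proof (rule has_gradient_inner_eq_0_if_invariant[OF g])
    fix t :: real
    show "pop_loss \<gamma> \<alpha> n M (x + t *\<^sub>R (0, axis i (axis j 1))) = pop_loss \<gamma> \<alpha> n M x"
      by (intro pop_loss_eqI TF_prompt_eq_if_relevant_blocks_eq)
        (use \<open>V_irrel i j\<close> in \<open>auto simp: axis_def\<close>)
  qed
  then show "snd g $ i $ j = 0" by (simp add: inner_Pair_axis_axis)
qed

lemma gradient_pop_loss_22_blocks_eq_0:
  assumes g: "has_gradient (pop_loss \<gamma> \<alpha> n M) g x"
    and P22: "\<forall>i j. P22_entry i j \<longrightarrow> fst x $ i $ j = 0"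
    and V22: "\<forall>i j. V22bar_entry i j \<longrightarrow> snd x $ i $ j = 0"
  shows "P22_entry i j \<Longrightarrow> fst g $ i $ j = 0" and "V22bar_entry i j \<Longrightarrow> snd g $ i $ j = 0"
proof -
  assume "P22_entry i j"
  have "g \<bullet> (axis i (axis j 1), 0) = 0"
  proof (rule has_gradient_inner_eq_0_if_invariant[OF g])
    fix t :: real
    show "pop_loss \<gamma> \<alpha> n M (x + t *\<^sub>R (axis i (axis j 1), 0)) = pop_loss \<gamma> \<alpha> n M x"
      by (intro pop_loss_eqI TF_prompt_eqI)
        (use \<open>P22_entry i j\<close> V22 in \<open>auto simp: axis_def P22_entry_def V22bar_entry_def\<close>)
  qed
  then show "fst g $ i $ j = 0" by (simp add: inner_Pair_axis_axis)
next
  assume "V22bar_entry i j"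
  have "g \<bullet> (0, axis i (axis j 1)) = 0"
  proof (rule has_gradient_inner_eq_0_if_invariant[OF g])
    fix t :: real
    show "pop_loss \<gamma> \<alpha> n M (x + t *\<^sub>R (0, axis i (axis j 1))) = pop_loss \<gamma> \<alpha> n M x"
      by (intro pop_loss_eqI TF_prompt_eqI)
        (use \<open>V22bar_entry i j\<close> P22 in \<open>auto simp: axis_def P22_entry_def V22bar_entry_def\<close>)
  qed
  then show "snd g $ i $ j = 0" by (simp add: inner_Pair_axis_axis)
qed

lemma gradient_flow_pop_loss_irrelevant_const:
  assumes "gradient_flow (pop_loss \<gamma> \<alpha> n M) X" and "0 \<le> t"
  shows "(P_irrel i j \<longrightarrow> fst (X t) $ i $ j = fst (X 0) $ i $ j) \<and>
         (V_irrel i j \<longrightarrow> snd (X t) $ i $ j = snd (X 0) $ i $ j)"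
proof (intro conjI impI)
  assume "P_irrel i j"
  have "X t \<bullet> (axis i (axis j 1), 0) = X 0 \<bullet> (axis i (axis j 1), 0)"
    by (rule gradient_flow_inner_const[OF assms(1) _ assms(2)])
      (simp add: inner_commute inner_Pair_axis_axis
        gradient_pop_loss_irrelevant_eq_0(1)[OF _ \<open>P_irrel i j\<close>])
  then show "fst (X t) $ i $ j = fst (X 0) $ i $ j" by (simp add: inner_Pair_axis_axis)
next
  assume "V_irrel i j"
  have "X t \<bullet> (0, axis i (axis j 1)) = X 0 \<bullet> (0, axis i (axis j 1))"
    by (rule gradient_flow_inner_const[OF assms(1) _ assms(2)])
      (simp add: inner_commute inner_Pair_axis_axis
        gradient_pop_loss_irrelevant_eq_0(2)[OF _ \<open>V_irrel i j\<close>])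
  then show "snd (X t) $ i $ j = snd (X 0) $ i $ j" by (simp add: inner_Pair_axis_axis)
qed

definition clear_22_blocks :: "'d::finite mat \<times> 'd mat \<Rightarrow> 'd mat \<times> 'd mat" where
  "clear_22_blocks x =
     ((\<chi> i j. if P22_entry i j then 0 else fst x $ i $ j),
      (\<chi> i j. if V22bar_entry i j then 0 else snd x $ i $ j))"

lemma linear_clear_22_blocks: "linear clear_22_blocks"
  by (rule linearI) (auto simp: clear_22_blocks_def vec_eq_iff)

lemma clear_22_blocks_selfadjoint: "clear_22_blocks x \<bullet> y = x \<bullet> clear_22_blocks y"
  unfolding clear_22_blocks_def inner_prod_def inner_vec_def
  by (intro arg_cong2[where f="(+)"] sum.cong refl) auto

lemma clear_22_blocks_idem: "clear_22_blocks (clear_22_blocks x) = clear_22_blocks x"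
  by (simp add: clear_22_blocks_def vec_eq_iff)

lemma clear_22_blocks_fixed_iff:
  "clear_22_blocks x = x \<longleftrightarrow>
     (\<forall>i j. P22_entry i j \<longrightarrow> fst x $ i $ j = 0) \<and> (\<forall>i j. V22bar_entry i j \<longrightarrow> snd x $ i $ j = 0)"
  by (auto simp: clear_22_blocks_def vec_eq_iff prod_eq_iff)

lemma pop_loss_expand:
  fixes M :: "('s, 'a, 'd::finite) sample measure"
  shows "pop_loss \<gamma> \<alpha> n M x = 1 / 2 * (\<integral>z. (\<Sum>j\<in>UNIV. (wvec z $ j - w_sarsa \<gamma> \<alpha> n z $ j +
      (\<Sum>t\<in>UNIV. (fst x $ fst t $ fst (snd t) * snd x $ Inr (Inr j) $ snd (snd t)) *
        prompt_moment \<gamma> n z (fst t) (fst (snd t)) (snd (snd t))))\<^sup>2) \<partial>M)"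
proof -
  have "(norm (TF n (fst x) (snd x) (prompt \<gamma> n z) - w_sarsa \<gamma> \<alpha> n z))\<^sup>2 =
      (\<Sum>j\<in>UNIV. (wvec z $ j - w_sarsa \<gamma> \<alpha> n z $ j +
        (\<Sum>t\<in>UNIV. (fst x $ fst t $ fst (snd t) * snd x $ Inr (Inr j) $ snd (snd t)) *
          prompt_moment \<gamma> n z (fst t) (fst (snd t)) (snd (snd t))))\<^sup>2)"
    for z :: "('s, 'a, 'd) sample"
    unfolding power2_norm_eq_inner inner_vec_def
    by (intro sum.cong refl) (simp add: TF_prompt_expand split_def power2_eq_square diff_add_eq)
  then show ?thesis
    unfolding pop_loss_def by simp
qed

locale sarsa_moments =
  fixes M :: "('s, 'a, 'd::finite) sample measure" and n :: nat
  assumes finite_M: "finite_measure M"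
    and meas_phi: "\<And>i. i \<le> n \<Longrightarrow> (\<lambda>z. phi z i) \<in> borel_measurable M"
    and meas_r: "\<And>i. 1 \<le> i \<Longrightarrow> i \<le> n \<Longrightarrow> (\<lambda>z. reward z i) \<in> borel_measurable M"
    and meas_w: "wvec \<in> borel_measurable M"
    and mom_phi: "\<And>i. i \<le> n \<Longrightarrow> integrable M (\<lambda>z. norm (phi z i) ^ 6)"
    and mom_r: "\<And>i. 1 \<le> i \<Longrightarrow> i \<le> n \<Longrightarrow> integrable M (\<lambda>z. (reward z i) ^ 6)"
    and mom_w: "integrable M (\<lambda>z. norm (wvec z) ^ 6)"
begin

lemma has_sixth_moment_phi: "i \<le> n \<Longrightarrow> has_sixth_moment M (\<lambda>z. phi z i $ j)"
  by (rule has_sixth_moment_vec_nth[OF meas_phi mom_phi])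

lemma has_sixth_moment_wvec: "has_sixth_moment M (\<lambda>z. wvec z $ j)"
  using has_sixth_moment_vec_nth[OF meas_w] mom_w by simp

lemma has_sixth_moment_reward: "1 \<le> i \<Longrightarrow> i \<le> n \<Longrightarrow> has_sixth_moment M (\<lambda>z. reward z i)"
  by (simp add: has_sixth_moment_def meas_r mom_r)

lemma has_sixth_moment_prompt:
  assumes "k \<le> n"
  shows "has_sixth_moment M (\<lambda>z. prompt \<gamma> n z k $ a)"
proof (cases "k < n")
  case True
  have eq: "(\<lambda>z. prompt \<gamma> n z k $ a) = (case a of
      Inl (Inl (Inl j)) \<Rightarrow> (\<lambda>z. phi z k $ j)
    | Inl (Inl (Inr j)) \<Rightarrow> (\<lambda>z. \<gamma> * phi z (Suc k) $ j)
    | Inl (Inr u) \<Rightarrow> (\<lambda>z. reward z (Suc k))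
    | Inr v \<Rightarrow> (\<lambda>z. 0))"
    using True by (auto simp: fun_eq_iff prompt_def xcol_def phi_plus_def phi_def split: sum.split)
  show ?thesis
    unfolding eq using True
    by (auto simp: has_sixth_moment_phi has_sixth_moment_reward has_sixth_moment_const[OF finite_M]
        intro: has_sixth_moment_cmult split: sum.split)
next
  case False
  have eq: "(\<lambda>z. prompt \<gamma> n z k $ a) = (case a of
      Inl v \<Rightarrow> (\<lambda>z. 0)
    | Inr (Inl u) \<Rightarrow> (\<lambda>z. 1)
    | Inr (Inr j) \<Rightarrow> (\<lambda>z. wvec z $ j))"
    using False by (auto simp: fun_eq_iff prompt_def wcol_def split: sum.split)
  show ?thesis
    unfolding eq
    by (auto simp: has_sixth_moment_wvec has_sixth_moment_const[OF finite_M] split: sum.split)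
qed

lemma square_integrable_prompt_moment:
  "square_integrable M (\<lambda>z. prompt_moment \<gamma> n z a b c)"
  unfolding prompt_moment_def
  by (intro square_integrable_cmult square_integrable_sum square_integrable_mult3
      has_sixth_moment_prompt) auto

lemma square_integrable_sarsa_residual:
  "square_integrable M (\<lambda>z. wvec z $ j - w_sarsa \<gamma> \<alpha> n z $ j)"
proof -
  \<comment> \<open>the factor \<open>1\<close> makes every summand a product of three sixth-moment variables\<close>
  have td: "td_error \<gamma> z i * phi z i $ j = reward z (Suc i) * phi z i $ j * 1
      + \<gamma> * (\<Sum>l\<in>UNIV. wvec z $ l * phi z (Suc i) $ l * phi z i $ j)
      - (\<Sum>l\<in>UNIV. wvec z $ l * phi z i $ l * phi z i $ j)" for z i
    by (simp add: td_error_def inner_vec_def phi_plus_def phi_def sum_distrib_left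
        sum_distrib_right algebra_simps)
  have residual: "wvec z $ j - w_sarsa \<gamma> \<alpha> n z $ j = - (\<alpha> / real n) * (\<Sum>i<n.
      reward z (Suc i) * phi z i $ j * 1
      + \<gamma> * (\<Sum>l\<in>UNIV. wvec z $ l * phi z (Suc i) $ l * phi z i $ j)
      - (\<Sum>l\<in>UNIV. wvec z $ l * phi z i $ l * phi z i $ j))" for z
    by (simp add: w_sarsa_def sum_component td)
  show ?thesis
    unfolding residual by (intro square_integrable_cmult square_integrable_sum square_integrable_add
        square_integrable_diff square_integrable_mult3 has_sixth_moment_phi has_sixth_moment_reward
        has_sixth_moment_wvec has_sixth_moment_const[OF finite_M]) auto
qed

lemma locally_C11_pop_loss: "locally_C11 (pop_loss \<gamma> \<alpha> n M)"
proof -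
  have "locally_C11 (\<lambda>x. fst x $ a $ b * snd x $ i $ c)" for a b i c
    using locally_C11_mult[OF locally_C11_inner locally_C11_inner,
        of "(axis a (axis b (1::real)), 0)" "(0, axis i (axis c (1::real)))"]
    by (simp add: inner_Pair_axis_axis)
  then have "locally_C11 (\<lambda>x. \<integral>z. (\<Sum>j\<in>UNIV. (wvec z $ j - w_sarsa \<gamma> \<alpha> n z $ j +
      (\<Sum>t\<in>UNIV. (fst x $ fst t $ fst (snd t) * snd x $ Inr (Inr j) $ snd (snd t)) *
        prompt_moment \<gamma> n z (fst t) (fst (snd t)) (snd (snd t))))\<^sup>2) \<partial>M)"
    by (intro locally_C11_expected_sum_squares square_integrable_sarsa_residual
        square_integrable_prompt_moment) auto
  then show ?thesis
    unfolding pop_loss_expand[abs_def] by (intro locally_C11_mult[OF locally_C11_const])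
qed

lemma gradient_flow_pop_loss_keeps_22_blocks_zero:
  assumes "\<forall>i j. P22_entry i j \<longrightarrow> fst x0 $ i $ j = 0"
    and "\<forall>i j. V22bar_entry i j \<longrightarrow> snd x0 $ i $ j = 0"
  shows "\<exists>X. gradient_flow (pop_loss \<gamma> \<alpha> n M) X \<and> X 0 = x0 \<and>
           (\<forall>t\<ge>0. \<forall>i j. (P22_entry i j \<longrightarrow> fst (X t) $ i $ j = 0) \<and>
                         (V22bar_entry i j \<longrightarrow> snd (X t) $ i $ j = 0))"
proof -
  obtain G where G: "locally_lipschitz G" "\<And>x. has_gradient (pop_loss \<gamma> \<alpha> n M) (G x) x"
    using locally_C11_pop_loss[of \<gamma> \<alpha>] by (rule locally_C11_gradientE) blast
  have "clear_22_blocks (G x) = G x" if "clear_22_blocks x = x" for x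
    using that gradient_pop_loss_22_blocks_eq_0[OF G(2)] by (auto simp: clear_22_blocks_fixed_iff)
  then have "\<exists>X. gradient_flow (pop_loss \<gamma> \<alpha> n M) X \<and> X 0 = x0 \<and>
      (\<forall>t\<ge>0. clear_22_blocks (X t) = X t)"
    using assms
    by (intro gradient_flow_in_invariant_subspace[OF _ G(2,1) linear_clear_22_blocks
          clear_22_blocks_selfadjoint clear_22_blocks_idem])
      (auto simp: pop_loss_def clear_22_blocks_fixed_iff)
  then show ?thesis by (auto simp: clear_22_blocks_fixed_iff)
qed

end

theorem proposition1:
  fixes M :: "('s, 'a, 'd::finite) sample measure"
    and n :: nat and \<gamma> \<alpha> :: real
  assumes M: "prob_space M"
    and n: "n \<ge> 1"
    and \<gamma>: "0 \<le> \<gamma>" "\<gamma> < 1"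
    and \<alpha>: "\<alpha> > 0"
    and meas_phi: "\<And>i. i \<le> n \<Longrightarrow> (\<lambda>z. phi z i) \<in> borel_measurable M"
    and meas_r: "\<And>i. 1 \<le> i \<Longrightarrow> i \<le> n \<Longrightarrow> (\<lambda>z. reward z i) \<in> borel_measurable M"
    and meas_w: "wvec \<in> borel_measurable M"
    and mom_phi: "\<And>i. i \<le> n \<Longrightarrow> integrable M (\<lambda>z. norm (phi z i) ^ 6)"
    and mom_r: "\<And>i. 1 \<le> i \<Longrightarrow> i \<le> n \<Longrightarrow> integrable M (\<lambda>z. (reward z i) ^ 6)"
    and mom_w: "integrable M (\<lambda>z. norm (wvec z) ^ 6)"
  shows
    \<comment> \<open>(i) the blocks P11, P21, V11, V12 and first rows of V21, V22 do not affect TF\<close>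
    "(\<forall>(z::('s, 'a, 'd) sample) (P::'d mat) (V::'d mat) P' V'.
        (\<forall>i j. \<not> P_irrel i j \<longrightarrow> P $ i $ j = P' $ i $ j) \<and>
        (\<forall>i j. \<not> V_irrel i j \<longrightarrow> V $ i $ j = V' $ i $ j) \<longrightarrow>
        TF n P V (prompt \<gamma> n z) = TF n P' V' (prompt \<gamma> n z))
     \<comment> \<open>(i) the gradient of L w.r.t. these blocks is zero\<close>
   \<and> (\<forall>P V. \<exists>g. has_gradient (pop_loss \<gamma> \<alpha> n M) g (P, V) \<and>
        (\<forall>i j. P_irrel i j \<longrightarrow> fst g $ i $ j = 0) \<and>
        (\<forall>i j. V_irrel i j \<longrightarrow> snd g $ i $ j = 0))
     \<comment> \<open>(i) hence these blocks stay unchanged along the gradient flow\<close>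
   \<and> (\<forall>X. gradient_flow (pop_loss \<gamma> \<alpha> n M) X \<longrightarrow>
        (\<forall>t\<ge>0. \<forall>i j.
           (P_irrel i j \<longrightarrow> fst (X t) $ i $ j = fst (X 0) $ i $ j) \<and>
           (V_irrel i j \<longrightarrow> snd (X t) $ i $ j = snd (X 0) $ i $ j)))
     \<comment> \<open>(ii) gradients w.r.t. P22 and bar-V22 vanish when P22 = 0 and bar-V22 = 0\<close>
   \<and> (\<forall>P V.
        (\<forall>i j. P22_entry i j \<longrightarrow> P $ i $ j = 0) \<and>
        (\<forall>i j. V22bar_entry i j \<longrightarrow> V $ i $ j = 0) \<longrightarrow>
        (\<exists>g. has_gradient (pop_loss \<gamma> \<alpha> n M) g (P, V) \<and>
           (\<forall>i j. P22_entry i j \<longrightarrow> fst g $ i $ j = 0) \<and>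
           (\<forall>i j. V22bar_entry i j \<longrightarrow> snd g $ i $ j = 0)))
     \<comment> \<open>(ii) hence from such an initialisation the flow admits a solution keeping them 0\<close>
   \<and> (\<forall>P0 V0.
        (\<forall>i j. P22_entry i j \<longrightarrow> P0 $ i $ j = 0) \<and>
        (\<forall>i j. V22bar_entry i j \<longrightarrow> V0 $ i $ j = 0) \<longrightarrow>
        (\<exists>X. gradient_flow (pop_loss \<gamma> \<alpha> n M) X \<and> X 0 = (P0, V0) \<and>
           (\<forall>t\<ge>0. \<forall>i j.
              (P22_entry i j \<longrightarrow> fst (X t) $ i $ j = 0) \<and>
              (V22bar_entry i j \<longrightarrow> snd (X t) $ i $ j = 0))))"
proof -
  interpret sarsa_moments M n
    using prob_space.axioms(1)[OF M] meas_phi meas_r meas_w mom_phi mom_r mom_w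
    by (rule sarsa_moments.intro)
  obtain G where G: "\<And>x. has_gradient (pop_loss \<gamma> \<alpha> n M) (G x) x"
    using locally_C11_pop_loss[of \<gamma> \<alpha>] by (rule locally_C11_gradientE) blast
  show ?thesis
    apply (intro conjI allI impI)
    subgoal by (blast intro: TF_prompt_eq_if_relevant_blocks_eq)
    subgoal using G gradient_pop_loss_irrelevant_eq_0[OF G] by blast
    subgoal using gradient_flow_pop_loss_irrelevant_const by blast
    subgoal using gradient_flow_pop_loss_irrelevant_const by blast
    subgoal for P V
      using G[of "(P, V)"] gradient_pop_loss_22_blocks_eq_0[OF G, of "(P, V)"]
      by (intro exI[of _ "G (P, V)"] conjI allI impI) auto
    subgoal for P0 V0
      using gradient_flow_pop_loss_keeps_22_blocks_zero[of "(P0, V0)"] by simp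
    done
qed

end
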